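(* For $z\in(0,1)$ and $\rho>-1$ define $$g(z,\rho)=\frac{\rho}{1+\rho}+\frac{1-z+z^{1/(1+\rho)}-z^{\rho/(1+\rho)}}{(1+z)\ln z}.$$ Then $g(z,\rho)\ge0$ for all $z\in(0,1)$ and all $\rho>-1$.
   Context: $\ln$ denotes the natural logarithm. *)

theory Defs
  imports Complex_Main
begin

definition g :: "real \<Rightarrow> real \<Rightarrow> real" where
  "g z \<rho> = \<rho> / (1 + \<rho>) +
     (1 - z + z powr (1 / (1 + \<rho>)) - z powr (\<rho> / (1 + \<rho>))) / ((1 + z) * ln z)"

end

theory Submission
  imports Defs
begin

(* Put a = 1/(1+\<rho>) > 0, so that \<rho>/(1+\<rho>) = 1 - a and
     g z \<rho> = numer z a / ((1+z) ln z),
     numer z a = (1-a)(1+z) ln z + 1 - z + z^a - z^(1-a).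
   The denominator is negative for 0 < z < 1, so it suffices to show numer z a \<le> 0.
   As a function of a, numer z has derivative
     ln z (z^a + z^(1-a) - 1 - z) = -ln z (1 - z^a)(1 - z^(1-a)),
   which is \<ge> 0 for a \<in> [0,1] and \<le> 0 for a \<ge> 1.  Hence numer z attains its
   maximum over a \<ge> 0 at a = 1, where numer z 1 = 0.
   The file first proves the factorisation and the two sign facts for
   z^a + z^(1-a), then the derivative and the maximum property of numer, and
   finally rewrites g in terms of numer. *)

lemma complementary_powr_factor:
  fixes z a :: real
  assumes "0 < z"
  shows "1 + z - (z powr a + z powr (1 - a)) = (1 - z powr a) * (1 - z powr (1 - a))"
proof -
  have "z powr a * z powr (1 - a) = z"
    using assms by (simp add: powr_add[symmetric])
  then show ?thesis by (simp add: algebra_simps)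
qed

text \<open>For a base in (0,1] and exponents a \<in> [0,1], both factors are nonnegative.\<close>
lemma complementary_powr_le:
  fixes z a :: real
  assumes "0 < z" "z \<le> 1" "0 \<le> a" "a \<le> 1"
  shows "z powr a + z powr (1 - a) \<le> 1 + z"
proof -
  have "z powr a \<le> 1" "z powr (1 - a) \<le> 1"
    using assms by (simp_all add: powr_le1)
  then have "0 \<le> (1 - z powr a) * (1 - z powr (1 - a))" by simp
  then show ?thesis using complementary_powr_factor[OF \<open>0 < z\<close>, of a] by linarith
qed

text \<open>For exponents a \<ge> 1 the two factors have opposite signs.\<close>
lemma complementary_powr_ge:
  fixes z a :: real
  assumes "0 < z" "z \<le> 1" "1 \<le> a"
  shows "1 + z \<le> z powr a + z powr (1 - a)"
proof -
  have "z powr a \<le> 1" using assms by (simp add: powr_le1)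
  moreover have "1 \<le> z powr (1 - a)" using powr_mono2'[of "1 - a" z 1] assms by simp
  ultimately have "(1 - z powr a) * (1 - z powr (1 - a)) \<le> 0"
    by (intro mult_nonneg_nonpos) simp_all
  then show ?thesis using complementary_powr_factor[OF \<open>0 < z\<close>, of a] by linarith
qed

text \<open>The numerator of g, written as a function of a = 1/(1+\<rho>).\<close>
definition numer :: "real \<Rightarrow> real \<Rightarrow> real" where
  "numer z a = (1 - a) * (1 + z) * ln z + 1 - z + z powr a - z powr (1 - a)"

lemma numer_at_one: "0 < z \<Longrightarrow> numer z 1 = 0"
  by (simp add: numer_def)

lemma has_derivative_numer:
  assumes "0 < z"
  shows "(numer z has_real_derivative ln z * (z powr a + z powr (1 - a) - 1 - z)) (at a)"
  unfolding numer_def using assms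
  by (auto intro!: derivative_eq_intros simp: algebra_simps)

text \<open>For 0 < z < 1 the numerator is maximal at a = 1 among all a \<ge> 0.\<close>
lemma numer_nonpos:
  fixes z a :: real
  assumes "0 < z" "z < 1" "0 \<le> a"
  shows "numer z a \<le> 0"
proof -
  have ln_neg: "ln z < 0" using assms by simp
  consider "a \<le> 1" | "1 \<le> a" by linarith
  then have "numer z a \<le> numer z 1"
  proof cases
    case 1
    show ?thesis
    proof (rule DERIV_nonneg_imp_nondecreasing[OF 1])
      fix x assume "a \<le> x" "x \<le> 1"
      then have "z powr x + z powr (1 - x) - 1 - z \<le> 0"
        using complementary_powr_le[of z x] assms by simp
      then show "\<exists>y. (numer z has_real_derivative y) (at x) \<and> 0 \<le> y"
        using has_derivative_numer[OF \<open>0 < z\<close>] ln_neg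
        by (blast intro: mult_nonpos_nonpos less_imp_le)
    qed
  next
    case 2
    show ?thesis
    proof (rule DERIV_nonpos_imp_nonincreasing[OF 2])
      fix x assume "1 \<le> x" "x \<le> a"
      then have "0 \<le> z powr x + z powr (1 - x) - 1 - z"
        using complementary_powr_ge[of z x] assms by simp
      then show "\<exists>y. (numer z has_real_derivative y) (at x) \<and> y \<le> 0"
        using has_derivative_numer[OF \<open>0 < z\<close>] ln_neg
        by (blast intro: mult_nonpos_nonneg less_imp_le)
    qed
  qed
  then show ?thesis using numer_at_one[OF \<open>0 < z\<close>] by simp
qed

lemma g_as_numer:
  fixes z \<rho> :: real
  assumes "0 < z" "z < 1" "\<rho> > -1"
  shows "g z \<rho> = numer z (1 / (1 + \<rho>)) / ((1 + z) * ln z)"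
proof -
  define a where "a = 1 / (1 + \<rho>)"
  have complement: "\<rho> / (1 + \<rho>) = 1 - a"
    using assms by (simp add: a_def field_simps)
  have "(1 + z) * ln z \<noteq> 0" using assms by simp
  then have "numer z a / ((1 + z) * ln z)
      = (1 - a) + (1 - z + z powr a - z powr (1 - a)) / ((1 + z) * ln z)"
    unfolding numer_def by (simp add: add_divide_distrib diff_divide_distrib)
  then show ?thesis
    unfolding g_def complement a_def[symmetric] by simp
qed

theorem mainTheorem3:
  fixes z \<rho> :: real
  assumes "0 < z" and "z < 1" and "\<rho> > -1"
  shows "g z \<rho> \<ge> 0"
proof -
  have "numer z (1 / (1 + \<rho>)) \<le> 0"
    using numer_nonpos assms by simp
  moreover have "(1 + z) * ln z < 0"
    using assms by (simp add: mult_pos_neg)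
  ultimately show ?thesis
    using g_as_numer[OF assms] by (simp add: divide_nonpos_neg)
qed

end
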